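(* Let $s$ be a bounded continuous proper scoring rule with convex exposure on an $n$-outcome forecast domain $\mathcal{D}$, with exposure function $\mathbf{g}$, and let $M$ be an upper bound on $\|\mathbf{g}\|_2$ over $\mathcal{D}$. For time steps $t=1,\dots,T$, an agent chooses a weight vector $\mathbf{w}^t\in\Delta^m$, after which forecasts $\mathbf{p}_1^t,\dots,\mathbf{p}_m^t\in\mathcal{D}$ and an outcome $j^t\in[n]$ are chosen adversarially and the agent receives score $s(\mathbf{p}^*_t(\mathbf{w}^t);j^t)$, where $\mathbf{p}^*_t(\mathbf{w})$ denotes the QA pool of $(\mathbf{p}_i^t,w_i)_{i=1}^m$ with respect to $\mathbf{g}$. Let $L^t(\mathbf{w}):=-s(\mathbf{p}^*_t(\mathbf{w});j^t)$. Suppose the agent plays as follows: $\mathbf{w}^1\in\Delta^m$ is arbitrary, and for each $t$, with $\eta_t:=\frac{1}{M\sqrt{mt}}$, it sets $\tilde{\mathbf{w}}^{t+1}=\mathbf{w}^t-\eta_t\nabla L^t(\mathbf{w}^t)$ and lets $\mathbf{w}^{t+1}$ be $\tilde{\mathbf{w}}^{t+1}$ if it lies in $\Delta^m$ and otherwise the orthogonal (Euclidean) projection of $\tilde{\mathbf{w}}^{t+1}$ onto $\Delta^m$. Then for every $\mathbf{w}^*\in\Delta^m$, \[\sum_{t=1}^T\Big(s(\mathbf{p}^*_t(\mathbf{w}^* );j^t)-s(\mathbf{p}^*_t(\mathbf{w}^t);j^t)\Big)\le 3\sqrt{m}\,M\sqrt{T}.\]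
   Context: $\Delta^k$ is the standard simplex in $\mathbb{R}^k$. An $n$-outcome forecast domain is a convex $(n-1)$-dimensional subset of $\Delta^n$. A proper scoring rule on $\mathcal{D}$ is $s:\mathcal{D}\times[n]\to\mathbb{R}$ with $\sum_j p(j)s(\mathbf{p};j)\ge\sum_j p(j)s(\mathbf{x};j)$ for all $\mathbf{p},\mathbf{x}\in\mathcal{D}$, equality only if $\mathbf{x}=\mathbf{p}$. $G(\mathbf{p}):=\sum_j p(j)s(\mathbf{p};j)$ is differentiable and strictly convex; the exposure function is $\mathbf{g}=\nabla G$, with values understood modulo translation by the all-ones vector (equivalently projected onto $\{\mathbf{x}:\sum_i x_i=0\}$). Convex exposure: range of $\mathbf{g}$ is convex. The QA pool of $(\mathbf{p}_i,w_i)$ is the unique $\mathbf{p}^*\in\mathcal{D}$ with $\mathbf{g}(\mathbf{p}^* )=\sum_i w_i\mathbf{g}(\mathbf{p}_i)$ (modulo the all-ones vector). The gradient $\nabla L^t$ is taken with respect to $\mathbf{w}$ and is likewise interpreted modulo translation by the all-ones vector in $\mathbb{R}^m$. *)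

theory Defs
  imports "HOL-Analysis.Analysis"
begin

definition prob_simplex :: "(real ^ 'k) set" where
  "prob_simplex = {x. (\<forall>i. 0 \<le> x $ i) \<and> (\<Sum>i\<in>UNIV. x $ i) = 1}"

definition ones :: "real ^ 'k" where
  "ones = (\<chi> i. 1)"

definition forecast_domain :: "(real ^ 'n) set \<Rightarrow> bool" where
  "forecast_domain D \<longleftrightarrow> D \<subseteq> prob_simplex \<and> convex D \<and> aff_dim D = int CARD('n) - 1"

definition proper_scoring_rule :: "(real ^ 'n) set \<Rightarrow> (real ^ 'n \<Rightarrow> 'n \<Rightarrow> real) \<Rightarrow> bool" where
  "proper_scoring_rule D s \<longleftrightarrow>
     (\<forall>p\<in>D. \<forall>x\<in>D. (\<Sum>j\<in>UNIV. p $ j * s p j) \<ge> (\<Sum>j\<in>UNIV. p $ j * s x j)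
        \<and> ((\<Sum>j\<in>UNIV. p $ j * s p j) = (\<Sum>j\<in>UNIV. p $ j * s x j) \<longrightarrow> x = p))"

definition expected_score :: "(real ^ 'n \<Rightarrow> 'n \<Rightarrow> real) \<Rightarrow> real ^ 'n \<Rightarrow> real" where
  "expected_score s p = (\<Sum>j\<in>UNIV. p $ j * s p j)"

text \<open>g is the exposure function of s on D: the gradient of G (relative to D),
  represented by its projection onto the sum-zero hyperplane.\<close>
definition exposure_function ::
  "(real ^ 'n) set \<Rightarrow> (real ^ 'n \<Rightarrow> 'n \<Rightarrow> real) \<Rightarrow> (real ^ 'n \<Rightarrow> real ^ 'n) \<Rightarrow> bool" where
  "exposure_function D s g \<longleftrightarrow>
     (\<forall>p\<in>D. (\<Sum>i\<in>UNIV. g p $ i) = 0 \<and>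
        (expected_score s has_derivative (\<lambda>h. g p \<bullet> h)) (at p within D))"

definition QA_pool ::
  "(real ^ 'n) set \<Rightarrow> (real ^ 'n \<Rightarrow> real ^ 'n) \<Rightarrow> ('m::finite \<Rightarrow> real ^ 'n) \<Rightarrow> real ^ 'm \<Rightarrow> real ^ 'n" where
  "QA_pool D g ps w =
     (THE q. q \<in> D \<and> (\<exists>c::real. g q = (\<Sum>i\<in>UNIV. w $ i *\<^sub>R g (ps i)) + c *\<^sub>R ones))"

end

theory Submission
  imports Defs
begin

(* Savage's characterisation turns a proper scoring rule with exposure g into
   s(q; k) = g(q)_k + c(q), and properness then gives, for forecasts q, q',
   (g q' - g q) . (q - e_k) <= s(q; k) - s(q'; k).  Since the exposure of the QA pool is
   linear in the weights, this says that the loss w |-> -s(p*(w); j) is convex on the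
   simplex with subgradient ((p*(w) - e_j) . g(p_i))_i, of squared norm at most 2 m M^2.
   The regret bound is then Zinkevich's analysis of online projected gradient descent with
   step sizes 1 / (K sqrt t), K = sqrt m M, on a set of squared diameter 2:
   telescoping contributes K sqrt T and the gradient terms 2 K sqrt T. *)

section \<open>One-sided directional derivatives\<close>

lemma convex_segment_mem:
  assumes "convex S" "x \<in> S" "y \<in> S" "\<tau> \<in> {0..1}"
  shows "x + \<tau> *\<^sub>R (y - x) \<in> S"
proof -
  have "x + \<tau> *\<^sub>R (y - x) = (1 - \<tau>) *\<^sub>R x + \<tau> *\<^sub>R y"
    by (simp add: algebra_simps)
  then show ?thesis
    using convexD_alt[OF assms(1-3)] assms(4) by simp
qed

lemma has_derivative_convex_quotient_tendsto:
  fixes f :: "'a::real_normed_vector \<Rightarrow> real"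
  assumes df: "(f has_derivative f') (at x within S)"
    and S: "convex S" "x \<in> S" "y \<in> S"
  shows "((\<lambda>\<tau>. (f (x + \<tau> *\<^sub>R (y - x)) - f x) / \<tau>) \<longlongrightarrow> f' (y - x)) (at_right 0)"
proof -
  let ?c = "\<lambda>\<tau>::real. x + \<tau> *\<^sub>R (y - x)"
  have "?c ` {0..1} \<subseteq> S"
    using convex_segment_mem[OF S] by auto
  then have "(f has_derivative f') (at (?c 0) within ?c ` {0..1})"
    using has_derivative_subset[OF df] by simp
  then have "((f \<circ> ?c) has_derivative (f' \<circ> (\<lambda>\<tau>. \<tau> *\<^sub>R (y - x)))) (at 0 within {0..1})"
    by (intro diff_chain_within) (auto intro!: derivative_eq_intros)
  moreover have "f' \<circ> (\<lambda>\<tau>. \<tau> *\<^sub>R (y - x)) = (*) (f' (y - x))"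
    using has_derivative_linear[OF df] by (auto simp: o_def linear_scale mult.commute)
  ultimately have "((f \<circ> ?c) has_field_derivative f' (y - x)) (at 0 within {0..1})"
    by (simp add: has_field_derivative_def)
  then show ?thesis
    by (simp add: has_field_derivative_iff at_within_Icc_at_right o_def)
qed

lemma eventually_at_right_0_unit_interval:
  "eventually (\<lambda>\<tau>. \<tau> \<in> {0<..1}) (at_right (0::real))"
  by (simp add: eventually_at_right_field) (auto intro!: exI[of _ 1])

lemma has_derivative_convex_ge:
  fixes f :: "'a::real_normed_vector \<Rightarrow> real"
  assumes "(f has_derivative f') (at x within S)" "convex S" "x \<in> S" "y \<in> S"
    and "\<And>\<tau>. \<tau> \<in> {0<..1} \<Longrightarrow> L \<le> (f (x + \<tau> *\<^sub>R (y - x)) - f x) / \<tau>"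
  shows "L \<le> f' (y - x)"
  by (rule tendsto_lowerbound[OF has_derivative_convex_quotient_tendsto[OF assms(1-4)]])
     (auto intro: eventually_mono[OF eventually_at_right_0_unit_interval] assms(5))

lemma has_derivative_convex_le:
  fixes f :: "'a::real_normed_vector \<Rightarrow> real"
  assumes "(f has_derivative f') (at x within S)" "convex S" "x \<in> S" "y \<in> S"
    and "\<And>\<tau>. \<tau> \<in> {0<..1} \<Longrightarrow> (f (x + \<tau> *\<^sub>R (y - x)) - f x) / \<tau> \<le> U \<tau>"
    and "(U \<longlongrightarrow> u) (at_right 0)"
  shows "f' (y - x) \<le> u"
  by (rule tendsto_le[OF _ assms(6) has_derivative_convex_quotient_tendsto[OF assms(1-4)]])
     (auto intro: eventually_mono[OF eventually_at_right_0_unit_interval] assms(5))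

section \<open>Online projected gradient descent\<close>

lemma convex_on_of_subgradients:
  fixes F :: "'a::real_inner \<Rightarrow> real"
  assumes "convex S" and subgrad: "\<And>x y. x \<in> S \<Longrightarrow> y \<in> S \<Longrightarrow> a x \<bullet> (y - x) \<le> F y - F x"
  shows "convex_on S F"
proof (rule convex_onI[OF _ \<open>convex S\<close>])
  fix t :: real and x y assume t: "0 < t" "t < 1" and "x \<in> S" "y \<in> S"
  define z where "z = (1 - t) *\<^sub>R x + t *\<^sub>R y"
  have "z \<in> S"
    using convexD_alt[OF \<open>convex S\<close> \<open>x \<in> S\<close> \<open>y \<in> S\<close>] t by (simp add: z_def)
  have "(1 - t) * (a z \<bullet> (x - z)) \<le> (1 - t) * (F x - F z)"
    using subgrad[OF \<open>z \<in> S\<close> \<open>x \<in> S\<close>] t by (intro mult_left_mono) auto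
  moreover have "t * (a z \<bullet> (y - z)) \<le> t * (F y - F z)"
    using subgrad[OF \<open>z \<in> S\<close> \<open>y \<in> S\<close>] t by (intro mult_left_mono) auto
  moreover have "(1 - t) * (a z \<bullet> (x - z)) + t * (a z \<bullet> (y - z)) = 0"
    by (simp add: z_def inner_diff_right inner_add_right algebra_simps)
  ultimately show "F z \<le> (1 - t) * F x + t * F y"
    by (simp add: algebra_simps)
qed

lemma convex_on_has_derivative_le:
  fixes F :: "'a::real_normed_vector \<Rightarrow> real"
  assumes "convex_on S F" "(F has_derivative F') (at x within S)" "x \<in> S" "y \<in> S"
  shows "F' (y - x) \<le> F y - F x"
proof (rule has_derivative_convex_le[OF assms(2) convex_on_imp_convex[OF assms(1)] assms(3,4)])
  fix \<tau> :: real assume "\<tau> \<in> {0<..1}"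
  then have "F ((1 - \<tau>) *\<^sub>R x + \<tau> *\<^sub>R y) \<le> (1 - \<tau>) * F x + \<tau> * F y"
    using convex_onD[OF assms(1)] assms(3,4) by simp
  moreover have "x + \<tau> *\<^sub>R (y - x) = (1 - \<tau>) *\<^sub>R x + \<tau> *\<^sub>R y"
    by (simp add: algebra_simps)
  ultimately have "F (x + \<tau> *\<^sub>R (y - x)) - F x \<le> \<tau> * (F y - F x)"
    by (simp add: algebra_simps)
  then show "(F (x + \<tau> *\<^sub>R (y - x)) - F x) / \<tau> \<le> F y - F x"
    using \<open>\<tau> \<in> {0<..1}\<close> by (simp add: pos_divide_le_eq mult.commute)
qed simp

lemma subgradient_le_derivative:
  fixes F :: "'a::real_inner \<Rightarrow> real"
  assumes "(F has_derivative F') (at x within S)" "convex S" "x \<in> S" "y \<in> S"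
    and subgrad: "\<And>z. z \<in> S \<Longrightarrow> a \<bullet> (z - x) \<le> F z - F x"
  shows "a \<bullet> (y - x) \<le> F' (y - x)"
proof (rule has_derivative_convex_ge[OF assms(1-4)])
  fix \<tau> :: real assume "\<tau> \<in> {0<..1}"
  then have "a \<bullet> (\<tau> *\<^sub>R (y - x)) \<le> F (x + \<tau> *\<^sub>R (y - x)) - F x"
    using subgrad[OF convex_segment_mem[OF assms(2-4)]] by simp
  then show "a \<bullet> (y - x) \<le> (F (x + \<tau> *\<^sub>R (y - x)) - F x) / \<tau>"
    using \<open>\<tau> \<in> {0<..1}\<close> by (simp add: pos_le_divide_eq mult.commute)
qed

(* A derivative within S is determined only up to normals of S, so v itself need not be
   bounded; all that is used of it is a . (z - w) <= v . (z - w) for the projected point z,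
   and the quadratic term is paid for by the subgradient a instead. *)
lemma projected_gradient_step:
  fixes S :: "'a::euclidean_space set"
  assumes S: "convex S" "closed S" and "w \<in> S" "u \<in> S" "0 \<le> \<eta>"
    and deriv: "(F has_derivative (\<lambda>h. v \<bullet> h)) (at w within S)"
    and subgrad: "\<And>y. y \<in> S \<Longrightarrow> a \<bullet> (y - w) \<le> F y - F w"
  shows "norm (closest_point S (w - \<eta> *\<^sub>R v) - u)^2
    \<le> norm (w - u)^2 - 2 * \<eta> * (v \<bullet> (w - u)) + \<eta>^2 * norm a^2"
proof -
  define z where "z = closest_point S (w - \<eta> *\<^sub>R v)"
  define d where "d = z - w"
  define e where "e = w - u"
  have "z \<in> S"
    unfolding z_def using closest_point_in_set[OF S(2)] \<open>u \<in> S\<close> by blast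
  have "(w - \<eta> *\<^sub>R v - z) \<bullet> (u - z) \<le> 0"
    unfolding z_def by (rule closest_point_dot[OF S \<open>u \<in> S\<close>])
  then have projection: "d \<bullet> d + d \<bullet> e + \<eta> * (v \<bullet> d) + \<eta> * (v \<bullet> e) \<le> 0"
    by (simp add: d_def e_def inner_diff_left inner_diff_right inner_commute algebra_simps)
  have derivative: "\<eta> * (a \<bullet> d) \<le> \<eta> * (v \<bullet> d)"
    unfolding d_def using subgradient_le_derivative[OF deriv S(1) \<open>w \<in> S\<close> \<open>z \<in> S\<close> subgrad] \<open>0 \<le> \<eta>\<close>
    by (intro mult_left_mono) auto
  have "0 \<le> (d + \<eta> *\<^sub>R a) \<bullet> (d + \<eta> *\<^sub>R a)"
    by simp
  then have square: "0 \<le> d \<bullet> d + 2 * \<eta> * (a \<bullet> d) + \<eta>^2 * (a \<bullet> a)"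
    by (simp add: inner_add_left inner_add_right inner_commute power2_eq_square algebra_simps)
  have "norm (z - u)^2 = d \<bullet> d + 2 * (d \<bullet> e) + e \<bullet> e"
    by (simp add: d_def e_def power2_norm_eq_inner inner_diff_left inner_diff_right inner_commute)
  then show ?thesis
    using projection derivative square by (simp add: z_def[symmetric] e_def[symmetric] power2_norm_eq_inner)
qed

lemma descent_inequality_rearrange:
  fixes \<eta> :: real
  assumes "0 < \<eta>" "d' \<le> d - 2 * \<eta> * r + \<eta>^2 * G"
  shows "r \<le> (d - d') / (2 * \<eta>) + \<eta> * G / 2"
  using assms by (simp add: field_simps power2_eq_square)

lemma inverse_sqrt_Suc_le: "1 / sqrt (Suc n) \<le> 2 * (sqrt (Suc n) - sqrt n)"
proof -
  define x y where "x = sqrt n" and "y = sqrt (Suc n)"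
  have "0 \<le> x" "x \<le> y" "0 < y"
    by (simp_all add: x_def y_def)
  moreover have "y^2 - x^2 = 1"
    by (simp add: x_def y_def)
  ultimately have "1 \<le> 2 * y * (y - x)"
    using zero_le_square[of "y - x"] by (simp add: power2_eq_square algebra_simps)
  with \<open>0 < y\<close> have "1 / y \<le> 2 * (y - x)"
    by (simp add: pos_divide_le_eq mult_ac)
  then show ?thesis
    by (simp add: x_def y_def)
qed

lemma telescoping_sqrt_sum_le:
  fixes r d :: "nat \<Rightarrow> real"
  assumes "0 < K" "0 \<le> c"
    and d: "\<And>t. t \<ge> 1 \<Longrightarrow> 0 \<le> d t \<and> d t \<le> \<delta>"
    and r: "\<And>t. t \<ge> 1 \<Longrightarrow> r t \<le> (d t - d (t + 1)) * K * sqrt t / 2 + c / sqrt t"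
  shows "(\<Sum>t = 1..T. r t) \<le> (\<delta> * K / 2 + 2 * c) * sqrt T"
proof -
  let ?C = "\<delta> * K / 2 + 2 * c"
  \<comment> \<open>The d (N + 1) term is what telescopes from one step to the next.\<close>
  have invariant: "(\<Sum>t = 1..N. r t) \<le> ?C * sqrt N - d (N + 1) * K * sqrt N / 2" for N
  proof (induction N)
    case (Suc N)
    define x y where "x = sqrt N" and "y = sqrt (Suc N)"
    have "x \<le> y" "0 < y"
      by (simp_all add: x_def y_def)
    have d_le: "d (Suc N) * K * (y - x) / 2 \<le> \<delta> * K * (y - x) / 2"
      using d[of "Suc N"] \<open>0 < K\<close> \<open>x \<le> y\<close> by (intro divide_right_mono mult_right_mono) auto
    have c_le: "c / y \<le> 2 * c * (y - x)"
      using mult_left_mono[OF inverse_sqrt_Suc_le[of N] \<open>0 \<le> c\<close>] by (simp add: x_def y_def algebra_simps)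
    have "(\<Sum>t = 1..N. r t) \<le> ?C * x - d (Suc N) * K * x / 2"
      using Suc.IH by (simp add: x_def)
    moreover have "r (Suc N) \<le> (d (Suc N) - d (Suc N + 1)) * K * y / 2 + c / y"
      using r[of "Suc N"] by (simp add: y_def)
    ultimately have "(\<Sum>t = 1..N. r t) + r (Suc N)
        \<le> (?C * x - d (Suc N) * K * x / 2) + ((d (Suc N) - d (Suc N + 1)) * K * y / 2 + c / y)"
      by (rule add_mono)
    also have "\<dots> = ?C * x + d (Suc N) * K * (y - x) / 2 - d (Suc N + 1) * K * y / 2 + c / y"
      by (simp add: field_simps)
    also have "\<dots> \<le> ?C * x + \<delta> * K * (y - x) / 2 - d (Suc N + 1) * K * y / 2 + 2 * c * (y - x)"
      using d_le c_le by linarith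
    also have "\<dots> = ?C * y - d (Suc N + 1) * K * y / 2"
      by (simp add: field_simps)
    finally have "(\<Sum>t = 1..N. r t) + r (Suc N) \<le> ?C * y - d (Suc N + 1) * K * y / 2" .
    then show ?case
      by (simp add: y_def)
  qed simp
  have "0 \<le> d (T + 1) * K * sqrt T / 2"
    using d[of "T + 1"] \<open>0 < K\<close> by simp
  then show ?thesis
    using invariant[of T] by linarith
qed

lemma online_gradient_descent_regret:
  fixes S :: "'a::euclidean_space set" and F :: "nat \<Rightarrow> 'a \<Rightarrow> real"
  assumes S: "convex S" "closed S" and "w 1 \<in> S" "u \<in> S" "0 < K"
    and diam: "\<And>x y. x \<in> S \<Longrightarrow> y \<in> S \<Longrightarrow> norm (x - y)^2 \<le> \<delta>"
    and subgrad: "\<And>t x y. t \<ge> 1 \<Longrightarrow> x \<in> S \<Longrightarrow> y \<in> S \<Longrightarrow> a t x \<bullet> (y - x) \<le> F t y - F t x"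
    and bound: "\<And>t x. t \<ge> 1 \<Longrightarrow> x \<in> S \<Longrightarrow> norm (a t x)^2 \<le> G"
    and deriv: "\<And>t. t \<ge> 1 \<Longrightarrow> (F t has_derivative (\<lambda>h. v t \<bullet> h)) (at (w t) within S)"
    and update: "\<And>t. t \<ge> 1 \<Longrightarrow> w (t + 1) = closest_point S (w t - (1 / (K * sqrt t)) *\<^sub>R v t)"
  shows "(\<Sum>t = 1..T. F t (w t) - F t u) \<le> (\<delta> * K / 2 + G / K) * sqrt T"
proof -
  have w: "w t \<in> S" if "t \<ge> 1" for t
    using that
  proof (induction t rule: nat_induct_at_least)
    case (Suc t)
    then show ?case
      using update[of t] closest_point_in_set[OF S(2)] \<open>u \<in> S\<close> by auto
  qed (use \<open>w 1 \<in> S\<close> in simp)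
  define d where "d t = norm (w t - u)^2" for t
  have "F t (w t) - F t u \<le> (d t - d (t + 1)) * K * sqrt t / 2 + G / (2 * K) / sqrt t"
    if "t \<ge> 1" for t
  proof -
    define \<eta> where "\<eta> = 1 / (K * sqrt t)"
    have "0 < \<eta>"
      using \<open>0 < K\<close> that by (simp add: \<eta>_def)
    have "convex_on S (F t)"
      using subgrad that by (intro convex_on_of_subgradients[OF S(1)])
    then have regret: "F t (w t) - F t u \<le> v t \<bullet> (w t - u)"
      using convex_on_has_derivative_le[OF _ deriv[OF that] w[OF that] \<open>u \<in> S\<close>]
      by (simp add: inner_diff_right)
    have "d (t + 1) \<le> d t - 2 * \<eta> * (v t \<bullet> (w t - u)) + \<eta>^2 * G"
    proof -
      have "d (t + 1) \<le> d t - 2 * \<eta> * (v t \<bullet> (w t - u)) + \<eta>^2 * norm (a t (w t))^2"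
        unfolding d_def update[OF that] \<eta>_def[symmetric] using \<open>0 < \<eta>\<close> w[OF that]
        by (intro projected_gradient_step[OF S _ \<open>u \<in> S\<close> _ deriv[OF that]] subgrad[OF that]) auto
      moreover have "\<eta>^2 * norm (a t (w t))^2 \<le> \<eta>^2 * G"
        using bound[OF that w[OF that]] by (intro mult_left_mono) auto
      ultimately show ?thesis
        by linarith
    qed
    then have "v t \<bullet> (w t - u) \<le> (d t - d (t + 1)) / (2 * \<eta>) + \<eta> * G / 2"
      by (rule descent_inequality_rearrange[OF \<open>0 < \<eta>\<close>])
    also have "\<dots> = (d t - d (t + 1)) * K * sqrt t / 2 + G / (2 * K) / sqrt t"
      using \<open>0 < K\<close> that by (simp add: \<eta>_def field_simps)
    finally show ?thesis
      using regret by linarith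
  qed
  moreover have "0 \<le> G"
    using bound[of 1 "w 1"] \<open>w 1 \<in> S\<close> by (meson norm_ge_zero order_trans zero_le_power2 le_refl)
  ultimately have "(\<Sum>t = 1..T. F t (w t) - F t u) \<le> (\<delta> * K / 2 + 2 * (G / (2 * K))) * sqrt T"
    using \<open>0 < K\<close> diam w \<open>u \<in> S\<close>
    by (intro telescoping_sqrt_sum_le[where d = d]) (auto simp: d_def)
  then show ?thesis
    by simp
qed

section \<open>The probability simplex\<close>

lemma prob_simplex_component_le_one:
  assumes "x \<in> prob_simplex"
  shows "x $ i \<le> 1"
proof -
  have "x $ i \<le> (\<Sum>k\<in>UNIV. x $ k)"
    using assms by (intro member_le_sum) (auto simp: prob_simplex_def)
  then show ?thesis
    using assms by (simp add: prob_simplex_def)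
qed

lemma closed_prob_simplex: "closed (prob_simplex :: (real ^ 'k) set)"
proof -
  have "prob_simplex = (\<Inter>i. {x::real ^ 'k. 0 \<le> x $ i}) \<inter> {x. (\<Sum>i\<in>UNIV. x $ i) = 1}"
    by (auto simp: prob_simplex_def)
  moreover have "closed {x::real ^ 'k. (\<Sum>i\<in>UNIV. x $ i) = 1}"
    by (intro closed_Collect_eq continuous_intros)
  moreover have "closed {x::real ^ 'k. 0 \<le> x $ i}" for i
    by (intro closed_Collect_le continuous_intros)
  ultimately show ?thesis
    by (metis closed_INT closed_Int)
qed

lemma convex_prob_simplex: "convex (prob_simplex :: (real ^ 'k) set)"
  unfolding convex_def prob_simplex_def
  by (auto simp: sum.distrib sum_distrib_left[symmetric])

lemma axis_in_prob_simplex: "axis i 1 \<in> prob_simplex"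
  by (auto simp: prob_simplex_def axis_def)

lemma inner_ones_prob_simplex: "x \<in> prob_simplex \<Longrightarrow> ones \<bullet> x = 1"
  by (simp add: ones_def inner_vec_def prob_simplex_def)

lemma prob_simplex_sum_mult_add_const:
  "q \<in> prob_simplex \<Longrightarrow> (\<Sum>j\<in>UNIV. q $ j * (a $ j + c)) = q \<bullet> a + c"
  by (simp add: prob_simplex_def inner_vec_def distrib_left sum.distrib flip: sum_distrib_right)

lemma power2_norm_vec: "norm x ^ 2 = (\<Sum>i\<in>UNIV. (x $ i)^2)"
  for x :: "real ^ 'n"
  unfolding power2_norm_eq_inner inner_vec_def by (simp add: power2_eq_square)

lemma norm_diff_prob_simplex_le:
  assumes "x \<in> prob_simplex" "y \<in> prob_simplex"
  shows "norm (x - y)^2 \<le> 2"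
proof -
  have "norm (x - y)^2 = (\<Sum>i\<in>UNIV. (x $ i - y $ i)^2)"
    by (simp add: power2_norm_vec)
  also have "\<dots> \<le> (\<Sum>i\<in>UNIV. x $ i + y $ i)"
  proof (rule sum_mono)
    fix i
    have "0 \<le> x $ i" "x $ i \<le> 1" "0 \<le> y $ i" "y $ i \<le> 1"
      using assms prob_simplex_component_le_one by (auto simp: prob_simplex_def)
    then show "(x $ i - y $ i)^2 \<le> x $ i + y $ i"
      by (smt (verit) mult_left_le mult_nonneg_nonneg power2_eq_square power2_diff)
  qed
  also have "\<dots> = 2"
    using assms by (simp add: sum.distrib prob_simplex_def)
  finally show ?thesis .
qed

section \<open>Proper scoring rules with exposure\<close>

lemma sum_add_scaleR_mult:
  fixes x h :: "real ^ 'n"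
  shows "(\<Sum>k\<in>UNIV. (x + \<tau> *\<^sub>R h) $ k * f k)
    = (\<Sum>k\<in>UNIV. x $ k * f k) + \<tau> * (\<Sum>k\<in>UNIV. h $ k * f k)"
  by (simp add: algebra_simps sum.distrib sum_distrib_left)

lemma proper_scoring_ruleD:
  assumes "proper_scoring_rule D s" "p \<in> D" "x \<in> D"
  shows proper_scoring_rule_le: "(\<Sum>j\<in>UNIV. p $ j * s x j) \<le> expected_score s p"
    and proper_scoring_rule_eqD: "(\<Sum>j\<in>UNIV. p $ j * s x j) = expected_score s p \<Longrightarrow> x = p"
  using assms by (auto simp: proper_scoring_rule_def expected_score_def)

(* Properness squeezes the difference quotient of the expected score along r - x between the
   pairings of r - x with the scores at both ends of the segment; continuity of s closes the
   squeeze. *)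
lemma proper_scoring_rule_exposure_inner:
  fixes D :: "(real ^ 'n) set" and s :: "real ^ 'n \<Rightarrow> 'n \<Rightarrow> real"
  assumes "convex D" "proper_scoring_rule D s" "\<forall>k. continuous_on D (\<lambda>q. s q k)"
    and "exposure_function D s g" "x \<in> D" "r \<in> D"
  shows "(\<Sum>k\<in>UNIV. (r - x) $ k * s x k) = g x \<bullet> (r - x)"
proof -
  let ?G = "expected_score s" and ?x = "\<lambda>\<tau>. x + \<tau> *\<^sub>R (r - x)"
  let ?score = "\<lambda>q. \<Sum>k\<in>UNIV. (r - x) $ k * s q k"
  have seg: "?x \<tau> \<in> D" if "\<tau> \<in> {0..1}" for \<tau>
    using convex_segment_mem[OF assms(1,5,6) that] .
  have dG: "(?G has_derivative (\<lambda>h. g x \<bullet> h)) (at x within D)"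
    using assms(4,5) by (simp add: exposure_function_def)
  have quotient_ge: "?score x \<le> (?G (?x \<tau>) - ?G x) / \<tau>" if "\<tau> \<in> {0<..1}" for \<tau>
  proof -
    have "(\<Sum>k\<in>UNIV. ?x \<tau> $ k * s x k) \<le> ?G (?x \<tau>)"
      by (rule proper_scoring_rule_le[OF assms(2) seg assms(5)]) (use that in auto)
    then have "?G x + \<tau> * ?score x \<le> ?G (?x \<tau>)"
      unfolding sum_add_scaleR_mult by (simp add: expected_score_def)
    then show ?thesis
      using that by (simp add: pos_le_divide_eq mult.commute)
  qed
  have quotient_le: "(?G (?x \<tau>) - ?G x) / \<tau> \<le> ?score (?x \<tau>)" if "\<tau> \<in> {0<..1}" for \<tau>
  proof -
    have "(\<Sum>k\<in>UNIV. x $ k * s (?x \<tau>) k) \<le> ?G x"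
      by (rule proper_scoring_rule_le[OF assms(2) assms(5) seg]) (use that in auto)
    moreover have "?G (?x \<tau>) = (\<Sum>k\<in>UNIV. x $ k * s (?x \<tau>) k) + \<tau> * ?score (?x \<tau>)"
      unfolding expected_score_def by (rule sum_add_scaleR_mult)
    ultimately show ?thesis
      using that by (simp add: pos_divide_le_eq mult.commute)
  qed
  have "((\<lambda>\<tau>. s (?x \<tau>) k) \<longlongrightarrow> s x k) (at_right 0)" for k
  proof -
    have "?x ` {0..1} \<subseteq> D"
      using seg by auto
    then have "continuous_on {0..1} (\<lambda>\<tau>. s (?x \<tau>) k)"
      by (intro continuous_on_compose2[OF assms(3)[rule_format]] continuous_intros)
    from continuous_on_Icc_at_rightD[OF this] show ?thesis
      by simp
  qed
  then have "((\<lambda>\<tau>. ?score (?x \<tau>)) \<longlongrightarrow> ?score x) (at_right 0)"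
    by (intro tendsto_intros)
  then have "g x \<bullet> (r - x) \<le> ?score x"
    using has_derivative_convex_le[OF dG assms(1,5,6) quotient_le] by simp
  moreover have "?score x \<le> g x \<bullet> (r - x)"
    using has_derivative_convex_ge[OF dG assms(1,5,6) quotient_ge] by simp
  ultimately show ?thesis
    by simp
qed

lemma forecast_domain_nonempty: "forecast_domain D \<Longrightarrow> D \<noteq> {}"
  by (auto simp: forecast_domain_def)

lemma forecast_domain_normal_eq_scaleR_ones:
  fixes D :: "(real ^ 'n) set"
  assumes dom: "forecast_domain D" and "x \<in> D"
    and normal: "\<And>r. r \<in> D \<Longrightarrow> z \<bullet> (r - x) = 0"
  shows "\<exists>c. z = c *\<^sub>R ones"
proof -
  have sub: "D \<subseteq> prob_simplex" and aff: "aff_dim D = int CARD('n) - 1"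
    using dom by (auto simp: forecast_domain_def)
  define T where "T = (\<lambda>r. r - x) ` D"
  define H where "H = {h::real ^ 'n. ones \<bullet> h = 0}"
  have ones_nonzero: "ones \<noteq> (0::real ^ 'n)"
    by (metis ones_def vec_lambda_beta zero_index zero_neq_one)
  have ones_D: "ones \<bullet> r = 1" if "r \<in> D" for r
    using sub that inner_ones_prob_simplex by blast
  have "T \<subseteq> H"
    using \<open>x \<in> D\<close> by (auto simp: T_def H_def inner_diff_right ones_D)
  then have "span T \<subseteq> H"
    by (simp add: H_def span_minimal subspace_hyperplane)
  moreover have "dim T = CARD('n) - 1"
    using aff aff_dim_eq_dim_subtract[of x D] \<open>x \<in> D\<close> by (simp add: T_def hull_inc)
  then have "dim (span T) = dim H"
    using dim_hyperplane[OF ones_nonzero] by (simp add: H_def dim_span)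
  ultimately have span_T: "span T = H"
    by (intro subspace_dim_equal) (auto simp: H_def subspace_hyperplane)
  define c where "c = (\<Sum>k\<in>UNIV. z $ k) / real CARD('n)"
  define z' where "z' = z - c *\<^sub>R ones"
  have "z' \<in> span T"
    by (simp add: span_T H_def z'_def c_def ones_def inner_vec_def sum_subtractf)
  moreover have "orthogonal z' t" if t: "t \<in> T" for t
  proof -
    obtain r where "r \<in> D" "t = r - x"
      using t by (auto simp: T_def)
    then show ?thesis
      using normal[of r] ones_D[of r] ones_D[OF \<open>x \<in> D\<close>]
      by (simp add: orthogonal_def z'_def inner_diff_left inner_diff_right[of ones])
  qed
  ultimately have "orthogonal z' z'"
    by (rule orthogonal_to_span)
  then have "z' = 0"
    by (simp add: orthogonal_def)
  then show ?thesis
    by (intro exI[of _ c]) (simp add: z'_def)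
qed

context
  fixes D :: "(real ^ 'n) set" and s :: "real ^ 'n \<Rightarrow> 'n \<Rightarrow> real" and g :: "real ^ 'n \<Rightarrow> real ^ 'n"
  assumes dom: "forecast_domain D" and proper: "proper_scoring_rule D s"
    and cont: "\<forall>k. continuous_on D (\<lambda>q. s q k)" and exp: "exposure_function D s g"
begin

lemma proper_scoring_rule_eq_exposure_add_const:
  assumes "x \<in> D"
  shows "\<exists>c. \<forall>k. s x k = g x $ k + c"
proof -
  define y where "y = (\<chi> k. s x k) - g x"
  have "convex D"
    using dom by (simp add: forecast_domain_def)
  have "y \<bullet> (r - x) = 0" if "r \<in> D" for r
  proof -
    have "(\<chi> k. s x k) \<bullet> (r - x) = g x \<bullet> (r - x)"
      using proper_scoring_rule_exposure_inner[OF \<open>convex D\<close> proper cont exp \<open>x \<in> D\<close> that]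
      by (simp add: inner_vec_def mult.commute)
    then show ?thesis
      by (simp add: y_def inner_diff_left)
  qed
  then obtain c where "y = c *\<^sub>R ones"
    using forecast_domain_normal_eq_scaleR_ones[OF dom \<open>x \<in> D\<close>] by blast
  then show ?thesis
    by (auto simp: y_def ones_def vec_eq_iff algebra_simps)
qed

lemma proper_scoring_rule_exposure_diff_le:
  assumes "q \<in> D" "q' \<in> D"
  shows "(g q' - g q) \<bullet> (q - axis j 1) \<le> s q j - s q' j"
proof -
  obtain c where c: "\<forall>k. s q k = g q $ k + c"
    using proper_scoring_rule_eq_exposure_add_const[OF \<open>q \<in> D\<close>] by blast
  obtain c' where c': "\<forall>k. s q' k = g q' $ k + c'"
    using proper_scoring_rule_eq_exposure_add_const[OF \<open>q' \<in> D\<close>] by blast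
  have "q \<in> prob_simplex"
    using dom \<open>q \<in> D\<close> by (auto simp: forecast_domain_def)
  then have "q \<bullet> g q' + c' \<le> q \<bullet> g q + c"
    using proper_scoring_rule_le[OF proper \<open>q \<in> D\<close> \<open>q' \<in> D\<close>]
    by (simp add: expected_score_def c c' prob_simplex_sum_mult_add_const)
  then show ?thesis
    by (simp add: c c' inner_diff_left inner_diff_right inner_axis inner_commute)
qed

lemma exposure_function_inj_on: "inj_on g D"
proof (rule inj_onI)
  fix q q' assume "q \<in> D" "q' \<in> D" "g q = g q'"
  then have "s q k = s q' k" for k
    using proper_scoring_rule_exposure_diff_le[OF \<open>q \<in> D\<close> \<open>q' \<in> D\<close>, of k]
      proper_scoring_rule_exposure_diff_le[OF \<open>q' \<in> D\<close> \<open>q \<in> D\<close>, of k]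
    by simp
  then have "(\<Sum>j\<in>UNIV. q $ j * s q' j) = expected_score s q"
    by (simp add: expected_score_def)
  then show "q = q'"
    using proper_scoring_rule_eqD[OF proper \<open>q \<in> D\<close> \<open>q' \<in> D\<close>] by simp
qed

end

section \<open>The QA pool and its loss\<close>

definition pool_loss_subgradient ::
  "(real ^ 'n) set \<Rightarrow> (real ^ 'n \<Rightarrow> real ^ 'n) \<Rightarrow> ('m::finite \<Rightarrow> real ^ 'n) \<Rightarrow> 'n \<Rightarrow> real ^ 'm \<Rightarrow> real ^ 'm"
  where "pool_loss_subgradient D g ps j w = (\<chi> i. (QA_pool D g ps w - axis j 1) \<bullet> g (ps i))"

context
  fixes D :: "(real ^ 'n) set" and s :: "real ^ 'n \<Rightarrow> 'n \<Rightarrow> real" and g :: "real ^ 'n \<Rightarrow> real ^ 'n"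
  assumes dom: "forecast_domain D" and proper: "proper_scoring_rule D s"
    and cont: "\<forall>k. continuous_on D (\<lambda>q. s q k)" and exp: "exposure_function D s g"
    and cexp: "convex (g ` D)"
begin

lemma QA_pool_exposure:
  fixes ps :: "'m::finite \<Rightarrow> real ^ 'n"
  assumes psD: "\<forall>i. ps i \<in> D" and w: "w \<in> prob_simplex"
  shows QA_pool_in_domain: "QA_pool D g ps w \<in> D"
    and exposure_QA_pool: "g (QA_pool D g ps w) = (\<Sum>i\<in>UNIV. w $ i *\<^sub>R g (ps i))"
proof -
  define u where "u = (\<Sum>i\<in>UNIV. w $ i *\<^sub>R g (ps i))"
  have "u \<in> g ` D"
    unfolding u_def using w psD
    by (intro convex_sum[OF _ cexp]) (auto simp: prob_simplex_def)
  then obtain q where q: "q \<in> D" "g q = u"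
    by auto
  have sum_g: "(\<Sum>k\<in>UNIV. g p $ k) = 0" if "p \<in> D" for p
    using exp that by (simp add: exposure_function_def)
  have "(\<Sum>k\<in>UNIV. u $ k) = (\<Sum>k\<in>UNIV. \<Sum>i\<in>UNIV. w $ i * g (ps i) $ k)"
    by (simp add: u_def sum_component)
  also have "\<dots> = (\<Sum>i\<in>UNIV. w $ i * (\<Sum>k\<in>UNIV. g (ps i) $ k))"
    by (subst sum.swap) (simp add: sum_distrib_left)
  finally have sum_u: "(\<Sum>k\<in>UNIV. u $ k) = 0"
    using sum_g psD by simp
  have "QA_pool D g ps w = q"
    unfolding QA_pool_def u_def[symmetric]
  proof (rule the_equality)
    fix y assume "y \<in> D \<and> (\<exists>c. g y = u + c *\<^sub>R ones)"
    then obtain c where "y \<in> D" and gy: "g y = u + c *\<^sub>R ones"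
      by auto
    have "(\<Sum>k\<in>UNIV. g y $ k) = (\<Sum>k\<in>UNIV. u $ k) + c * real CARD('n)"
      by (simp add: gy ones_def sum.distrib)
    then have "c = 0"
      using sum_g[OF \<open>y \<in> D\<close>] sum_u by simp
    then show "y = q"
      using exposure_function_inj_on[OF dom proper cont exp] \<open>y \<in> D\<close> q gy
      by (auto dest: inj_onD)
  qed (use q in \<open>auto intro!: exI[of _ 0]\<close>)
  then show "QA_pool D g ps w \<in> D" "g (QA_pool D g ps w) = u"
    using q by simp_all
qed

lemma pool_loss_subgradient_le:
  fixes ps :: "'m::finite \<Rightarrow> real ^ 'n"
  assumes psD: "\<forall>i. ps i \<in> D"
    and w: "w \<in> prob_simplex" and w': "w' \<in> prob_simplex"
  shows "pool_loss_subgradient D g ps j w \<bullet> (w' - w)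
    \<le> s (QA_pool D g ps w) j - s (QA_pool D g ps w') j"
proof -
  let ?q = "QA_pool D g ps w" and ?q' = "QA_pool D g ps w'"
  note QA = QA_pool_in_domain[OF psD] exposure_QA_pool[OF psD]
  have "g ?q' - g ?q = (\<Sum>i\<in>UNIV. (w' $ i - w $ i) *\<^sub>R g (ps i))"
    by (simp add: QA w w' sum_subtractf[symmetric] scaleR_diff_left)
  then have "(g ?q' - g ?q) \<bullet> (?q - axis j 1)
      = (\<Sum>i\<in>UNIV. (w' $ i - w $ i) * (g (ps i) \<bullet> (?q - axis j 1)))"
    by (simp add: inner_sum_left)
  also have "\<dots> = pool_loss_subgradient D g ps j w \<bullet> (w' - w)"
    by (simp add: pool_loss_subgradient_def inner_vec_def inner_commute mult.commute)
  finally show ?thesis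
    using proper_scoring_rule_exposure_diff_le[OF dom proper cont exp QA(1)[OF w] QA(1)[OF w'], where j = j]
    by linarith
qed

lemma norm_pool_loss_subgradient_le:
  fixes ps :: "'m::finite \<Rightarrow> real ^ 'n"
  assumes psD: "\<forall>i. ps i \<in> D" and w: "w \<in> prob_simplex"
    and M: "\<forall>q\<in>D. norm (g q) \<le> M"
  shows "norm (pool_loss_subgradient D g ps j w)^2 \<le> 2 * real CARD('m) * M^2"
proof -
  let ?e = "QA_pool D g ps w - axis j 1"
  have "QA_pool D g ps w \<in> prob_simplex"
    using QA_pool_in_domain[OF psD w] dom by (auto simp: forecast_domain_def)
  then have norm_e: "norm ?e ^ 2 \<le> 2"
    by (intro norm_diff_prob_simplex_le axis_in_prob_simplex)
  have "(?e \<bullet> g (ps i))^2 \<le> 2 * M^2" for i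
  proof -
    have "(?e \<bullet> g (ps i))^2 \<le> (norm ?e * norm (g (ps i)))^2"
      by (metis Cauchy_Schwarz_ineq2 abs_ge_zero power2_abs power_mono)
    also have "\<dots> \<le> 2 * M^2"
      using norm_e M psD by (auto simp: power_mult_distrib intro!: mult_mono power_mono)
    finally show ?thesis .
  qed
  then have "(\<Sum>i\<in>UNIV. (?e \<bullet> g (ps i))^2) \<le> 2 * real CARD('m) * M^2"
    using sum_mono[of UNIV "\<lambda>i. (?e \<bullet> g (ps i))^2" "\<lambda>_. 2 * M^2"] by simp
  then show ?thesis
    by (simp add: pool_loss_subgradient_def power2_norm_vec)
qed

end

theorem theorem5p5:
  fixes D :: "(real ^ 'n) set"
    and s :: "real ^ 'n \<Rightarrow> 'n \<Rightarrow> real"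
    and g :: "real ^ 'n \<Rightarrow> real ^ 'n"
    and M :: real
    and p :: "nat \<Rightarrow> 'm::finite \<Rightarrow> real ^ 'n"
    and j :: "nat \<Rightarrow> 'n"
    and w :: "nat \<Rightarrow> real ^ 'm"
    and v :: "nat \<Rightarrow> real ^ 'm"
    and wstar :: "real ^ 'm"
    and T :: nat
  assumes domain: "forecast_domain D"
    and proper: "proper_scoring_rule D s"
    and bounded: "\<exists>B. \<forall>q\<in>D. \<forall>k. \<bar>s q k\<bar> \<le> B"
    and continuous: "\<forall>k. continuous_on D (\<lambda>q. s q k)"
    and exposure: "exposure_function D s g"
    and convex_exposure: "convex (g ` D)"
    and M_bound: "\<forall>q\<in>D. norm (g q) \<le> M"
    and forecasts: "\<forall>t\<ge>1. \<forall>i. p t i \<in> D"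
    and w1: "w 1 \<in> prob_simplex"
    and gradient: "\<forall>t\<ge>1. ((\<lambda>u. - s (QA_pool D g (p t) u) (j t)) has_derivative (\<lambda>h. v t \<bullet> h))
                      (at (w t) within prob_simplex)"
    and update: "\<forall>t\<ge>1. w (t + 1) =
                   (let wt = w t - (1 / (M * sqrt (real CARD('m) * real t))) *\<^sub>R v t
                    in if wt \<in> prob_simplex then wt else closest_point prob_simplex wt)"
    and wstar: "wstar \<in> prob_simplex"
  shows "(\<Sum>t = 1..T. s (QA_pool D g (p t) wstar) (j t) - s (QA_pool D g (p t) (w t)) (j t))
           \<le> 3 * sqrt (real CARD('m)) * M * sqrt (real T)"
proof (cases "M = 0")
  case True
  \<comment> \<open>Then the exposure vanishes on all forecasts, so the pool does not depend on the weights.\<close>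
  then have "g (p t i) = 0" if "t \<ge> 1" for t i
    using M_bound forecasts that by auto
  then show ?thesis
    using True by (simp add: QA_pool_def)
next
  case False
  define K where "K = sqrt (real CARD('m)) * M"
  have "0 \<le> M"
    using M_bound forecast_domain_nonempty[OF domain] by (meson all_not_in_conv norm_ge_zero order_trans)
  then have "0 < K"
    using False by (simp add: K_def)
  have "(\<Sum>t = 1..T. - s (QA_pool D g (p t) (w t)) (j t) - - s (QA_pool D g (p t) wstar) (j t))
      \<le> (2 * K / 2 + 2 * real CARD('m) * M^2 / K) * sqrt T"
  proof (rule online_gradient_descent_regret[where F = "\<lambda>t u. - s (QA_pool D g (p t) u) (j t)"
        and a = "\<lambda>t. pool_loss_subgradient D g (p t) (j t)"])
    fix t :: nat assume "t \<ge> 1"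
    have "M * sqrt (real CARD('m) * real t) = K * sqrt t"
      by (simp add: K_def real_sqrt_mult)
    then show "w (t + 1) = closest_point prob_simplex (w t - (1 / (K * sqrt t)) *\<^sub>R v t)"
      using update \<open>t \<ge> 1\<close> by (simp add: Let_def closest_point_self)
  qed (use domain proper continuous exposure convex_exposure M_bound forecasts w1 gradient wstar \<open>0 < K\<close>
        in \<open>auto intro: pool_loss_subgradient_le norm_pool_loss_subgradient_le norm_diff_prob_simplex_le
          convex_prob_simplex closed_prob_simplex\<close>)
  moreover have "2 * K / 2 + 2 * real CARD('m) * M^2 / K = 3 * sqrt (real CARD('m)) * M"
    using False by (simp add: K_def power2_eq_square field_simps)
  ultimately show ?thesis
    by simp
qed

end
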